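(* There exist a finite atom set $\Phi$, a finite agent set $I$, a logic $\Lambda$, an $\boldsymbol{\mathcal{L}}_\Lambda$ modal space $\boldsymbol{X}$ and a clean map $\boldsymbol{f}$ on $\boldsymbol{X}$ induced by a finite, Boolean multi-pointed action model that is not static, such that $\boldsymbol{f}$ exhibits nontrivial recurrence (with respect to the Stone topology): there is $\boldsymbol{x}\in\boldsymbol{X}$ whose orbit $\mathcal{O}_{\boldsymbol{f}}(\boldsymbol{x})$ is not periodic and contains a recurrent point.
   Context: Setting: atom set $\Phi$, finite agent set $I$, modal language $\mathcal{L}$ ($\varphi::=\top\mid p\mid\neg\varphi\mid\varphi\wedge\varphi\mid\square_i\varphi$), logic $\Lambda$ a normal modal logic extending $K$, $\boldsymbol{\mathcal{L}}_\Lambda$ the set of $\Lambda$-equivalence classes of formulas. For a set $X$ of pointed Kripke models (countable nonempty state sets, standard semantics), the modal space is $\boldsymbol{X}=\{\boldsymbol{x}:x\in X\}$, $\boldsymbol{x}=\{y\in X:y,x\text{ satisfy the same formulas}\}$, with the Stone topology generated by the sets $\{\boldsymbol{x}:x\vDash\varphi\}$. Clean map: induced via product update $x\mapsto x\otimes\Sigma\Gamma$ by a multi-pointed action model $\Sigma\Gamma=(\llbracket\Sigma\rrbracket,\mathsf{R},pre,post,\Gamma)$ (countable action set, relations $\mathsf{R}_i$, preconditions in $\mathcal{L}$, postconditions $\top$ or conjunctions of literals over $\Phi$, designated set $\emptyset\ne\Gamma\subseteq\llbracket\Sigma\rrbracket$) that is precondition finite, exhaustive, deterministic and closing over $X$ (every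 $x\in X$ satisfies $pre(\sigma)$ for exactly one $\sigma\in\Gamma$, finitely many preconditions up to equivalence, and $x\otimes\Sigma\Gamma\in X$). Product update: states $(s,\sigma)$ with $Ms\vDash pre(\sigma)$, relations componentwise, $p$ true at $(s,\sigma)$ iff $post(\sigma)\vDash p$, or $s\in\llbracket p\rrbracket$ and $post(\sigma)\nvDash\neg p$; designated state $(s,\sigma)$ for the applicable $\sigma\in\Gamma$. $\boldsymbol{f}(\boldsymbol{x})$ is the class of $x\otimes\Sigma\Gamma$. $\Sigma\Gamma$ is finite if $\llbracket\Sigma\rrbracket$ is finite, Boolean if every precondition is a Boolean (modality-free) formula, static if every postcondition is $\top$. Orbit: $\mathcal{O}_{\boldsymbol{f}}(\boldsymbol{x})=\{\boldsymbol{f}^n(\boldsymbol{x}):n\in\mathbb{N}_0\}$; it is periodic if $\boldsymbol{f}^{n+k}(\boldsymbol{x})=\boldsymbol{f}^n(\boldsymbol{x})$ for some $n\ge0,k>0$. The limit set $\omega_{\boldsymbol{f}}(\boldsymbol{y})$ is the set of limits of convergent subsequences $\boldsymbol{f}^{n_1}(\boldsymbol{y}),\boldsymbol{f}^{n_2}(\boldsymbol{y}),\dots$ ($n_1<n_2<\cdots$); $\boldsymbol{y}$ is recurrent if $\boldsymbol{y}\in\omega_{\boldsymbol{f}}(\boldsymbol{y})$. *)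

theory Defs
  imports "HOL-Analysis.Analysis"
begin

datatype fm = Top | Atom nat | Neg fm | Conj fm fm | Box nat fm

definition Imp :: "fm \<Rightarrow> fm \<Rightarrow> fm" where
  "Imp a b = Neg (Conj a (Neg b))"

fun wf_fm :: "nat set \<Rightarrow> nat set \<Rightarrow> fm \<Rightarrow> bool" where
  "wf_fm Phi I Top = True"
| "wf_fm Phi I (Atom p) = (p \<in> Phi)"
| "wf_fm Phi I (Neg a) = wf_fm Phi I a"
| "wf_fm Phi I (Conj a b) = (wf_fm Phi I a \<and> wf_fm Phi I b)"
| "wf_fm Phi I (Box i a) = (i \<in> I \<and> wf_fm Phi I a)"

fun boolean_fm :: "fm \<Rightarrow> bool" where
  "boolean_fm Top = True"
| "boolean_fm (Atom p) = True"
| "boolean_fm (Neg a) = boolean_fm a"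
| "boolean_fm (Conj a b) = (boolean_fm a \<and> boolean_fm b)"
| "boolean_fm (Box i a) = False"

text \<open>States live in a countable universe closed under the pairing used by product update.\<close>
datatype state = Base nat | Upd state nat

record kmodel =
  W :: "state set"
  R :: "nat \<Rightarrow> (state \<times> state) set"
  V :: "nat \<Rightarrow> state set"

type_synonym pmodel = "kmodel \<times> state"

definition wf_pmodel :: "pmodel \<Rightarrow> bool" where
  "wf_pmodel x = (let M = fst x in snd x \<in> W M \<and> (\<forall>i. R M i \<subseteq> W M \<times> W M) \<and> (\<forall>p. V M p \<subseteq> W M))"

fun sat :: "kmodel \<Rightarrow> state \<Rightarrow> fm \<Rightarrow> bool" where
  "sat M s Top = True"
| "sat M s (Atom p) = (s \<in> V M p)"
| "sat M s (Neg a) = (\<not> sat M s a)"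
| "sat M s (Conj a b) = (sat M s a \<and> sat M s b)"
| "sat M s (Box i a) = (\<forall>t. (s, t) \<in> R M i \<longrightarrow> sat M t a)"

definition psat :: "pmodel \<Rightarrow> fm \<Rightarrow> bool" where
  "psat x a = sat (fst x) (snd x) a"

definition entails :: "fm \<Rightarrow> fm \<Rightarrow> bool" where
  "entails a b = (\<forall>x. wf_pmodel x \<longrightarrow> psat x a \<longrightarrow> psat x b)"

fun pv :: "(fm \<Rightarrow> bool) \<Rightarrow> fm \<Rightarrow> bool" where
  "pv v Top = True"
| "pv v (Atom p) = v (Atom p)"
| "pv v (Neg a) = (\<not> pv v a)"
| "pv v (Conj a b) = (pv v a \<and> pv v b)"
| "pv v (Box i a) = v (Box i a)"

definition tautology :: "fm \<Rightarrow> bool" where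
  "tautology a = (\<forall>v. pv v a)"

fun subst_fm :: "(nat \<Rightarrow> fm) \<Rightarrow> fm \<Rightarrow> fm" where
  "subst_fm g Top = Top"
| "subst_fm g (Atom p) = g p"
| "subst_fm g (Neg a) = Neg (subst_fm g a)"
| "subst_fm g (Conj a b) = Conj (subst_fm g a) (subst_fm g b)"
| "subst_fm g (Box i a) = Box i (subst_fm g a)"

definition normal_logic :: "nat set \<Rightarrow> nat set \<Rightarrow> fm set \<Rightarrow> bool" where
  "normal_logic Phi I Lam =
    ((\<forall>a\<in>Lam. wf_fm Phi I a)
     \<and> (\<forall>a. wf_fm Phi I a \<and> tautology a \<longrightarrow> a \<in> Lam)
     \<and> (\<forall>i a b. i \<in> I \<and> wf_fm Phi I a \<and> wf_fm Phi I b \<longrightarrow>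
            Imp (Box i (Imp a b)) (Imp (Box i a) (Box i b)) \<in> Lam)
     \<and> (\<forall>a b. a \<in> Lam \<and> Imp a b \<in> Lam \<longrightarrow> b \<in> Lam)
     \<and> (\<forall>i a. i \<in> I \<and> a \<in> Lam \<longrightarrow> Box i a \<in> Lam)
     \<and> (\<forall>g a. a \<in> Lam \<and> (\<forall>p\<in>Phi. wf_fm Phi I (g p)) \<longrightarrow> subst_fm g a \<in> Lam))"

definition modal_space_of :: "nat set \<Rightarrow> nat set \<Rightarrow> fm set \<Rightarrow> pmodel set \<Rightarrow> bool" where
  "modal_space_of Phi I Lam X = (\<forall>x\<in>X. wf_pmodel x \<and> (\<forall>a\<in>Lam. psat x a))"

definition cls :: "nat set \<Rightarrow> nat set \<Rightarrow> pmodel set \<Rightarrow> pmodel \<Rightarrow> pmodel set" where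
  "cls Phi I X x = {y \<in> X. \<forall>a. wf_fm Phi I a \<longrightarrow> (psat y a \<longleftrightarrow> psat x a)}"

definition mspace :: "nat set \<Rightarrow> nat set \<Rightarrow> pmodel set \<Rightarrow> pmodel set set" where
  "mspace Phi I X = cls Phi I X ` X"

definition stone_top :: "nat set \<Rightarrow> nat set \<Rightarrow> pmodel set \<Rightarrow> pmodel set topology" where
  "stone_top Phi I X =
     topology_generated_by {{cls Phi I X x | x. x \<in> X \<and> psat x a} | a. wf_fm Phi I a}"

record amodel =
  Acts :: "nat set"
  ARel :: "nat \<Rightarrow> (nat \<times> nat) set"
  pre  :: "nat \<Rightarrow> fm"
  post :: "nat \<Rightarrow> fm"
  Des  :: "nat set"

fun is_literal :: "nat set \<Rightarrow> fm \<Rightarrow> bool" where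
  "is_literal Phi (Atom p) = (p \<in> Phi)"
| "is_literal Phi (Neg (Atom p)) = (p \<in> Phi)"
| "is_literal Phi _ = False"

inductive lit_conj :: "nat set \<Rightarrow> fm \<Rightarrow> bool" for Phi where
  "is_literal Phi a \<Longrightarrow> lit_conj Phi a"
| "lit_conj Phi a \<Longrightarrow> lit_conj Phi b \<Longrightarrow> lit_conj Phi (Conj a b)"

definition wf_amodel :: "nat set \<Rightarrow> nat set \<Rightarrow> amodel \<Rightarrow> bool" where
  "wf_amodel Phi I S =
    (countable (Acts S)
     \<and> (\<forall>i. ARel S i \<subseteq> Acts S \<times> Acts S)
     \<and> (\<forall>\<sigma>\<in>Acts S. wf_fm Phi I (pre S \<sigma>))
     \<and> (\<forall>\<sigma>\<in>Acts S. post S \<sigma> = Top \<or> lit_conj Phi (post S \<sigma>))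
     \<and> Des S \<noteq> {} \<and> Des S \<subseteq> Acts S)"

definition prod_model :: "kmodel \<Rightarrow> amodel \<Rightarrow> kmodel" where
  "prod_model M S =
    (let Wn = {Upd s \<sigma> | s \<sigma>. s \<in> W M \<and> \<sigma> \<in> Acts S \<and> sat M s (pre S \<sigma>)} in
     \<lparr> W = Wn,
       R = (\<lambda>i. {(Upd s \<sigma>, Upd t \<tau>) | s \<sigma> t \<tau>.
                   Upd s \<sigma> \<in> Wn \<and> Upd t \<tau> \<in> Wn \<and> (s, t) \<in> R M i \<and> (\<sigma>, \<tau>) \<in> ARel S i}),
       V = (\<lambda>p. {Upd s \<sigma> | s \<sigma>. Upd s \<sigma> \<in> Wn \<and>
                   (entails (post S \<sigma>) (Atom p) \<or>
                    (s \<in> V M p \<and> \<not> entails (post S \<sigma>) (Neg (Atom p))))}) \<rparr>)"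

definition prod_update :: "pmodel \<Rightarrow> amodel \<Rightarrow> pmodel" where
  "prod_update x S =
    (prod_model (fst x) S, Upd (snd x) (THE \<sigma>. \<sigma> \<in> Des S \<and> psat x (pre S \<sigma>)))"

definition precondition_finite :: "amodel \<Rightarrow> bool" where
  "precondition_finite S =
     finite ((\<lambda>\<sigma>. {b. entails b (pre S \<sigma>) \<and> entails (pre S \<sigma>) b}) ` Acts S)"

definition exhaustive_deterministic :: "pmodel set \<Rightarrow> amodel \<Rightarrow> bool" where
  "exhaustive_deterministic X S = (\<forall>x\<in>X. \<exists>!\<sigma>. \<sigma> \<in> Des S \<and> psat x (pre S \<sigma>))"

definition closing :: "pmodel set \<Rightarrow> amodel \<Rightarrow> bool" where
  "closing X S = (\<forall>x\<in>X. prod_update x S \<in> X)"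

definition clean_action_model :: "nat set \<Rightarrow> nat set \<Rightarrow> pmodel set \<Rightarrow> amodel \<Rightarrow> bool" where
  "clean_action_model Phi I X S =
     (wf_amodel Phi I S \<and> precondition_finite S \<and> exhaustive_deterministic X S \<and> closing X S)"

definition finite_am :: "amodel \<Rightarrow> bool" where
  "finite_am S = finite (Acts S)"

definition boolean_am :: "amodel \<Rightarrow> bool" where
  "boolean_am S = (\<forall>\<sigma>\<in>Acts S. boolean_fm (pre S \<sigma>))"

definition static_am :: "amodel \<Rightarrow> bool" where
  "static_am S = (\<forall>\<sigma>\<in>Acts S. post S \<sigma> = Top)"

definition clean_map :: "nat set \<Rightarrow> nat set \<Rightarrow> pmodel set \<Rightarrow> amodel \<Rightarrow> pmodel set \<Rightarrow> pmodel set" where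
  "clean_map Phi I X S c = cls Phi I X (prod_update (SOME x. x \<in> c) S)"

definition periodic_orbit :: "('a \<Rightarrow> 'a) \<Rightarrow> 'a \<Rightarrow> bool" where
  "periodic_orbit f x = (\<exists>n k. k > 0 \<and> (f ^^ (n + k)) x = (f ^^ n) x)"

definition omega_limit :: "'a topology \<Rightarrow> ('a \<Rightarrow> 'a) \<Rightarrow> 'a \<Rightarrow> 'a set" where
  "omega_limit T f y =
     {l. \<exists>r. strict_mono r \<and> limitin T (\<lambda>j. (f ^^ (r j)) y) l sequentially}"

definition recurrent :: "'a topology \<Rightarrow> ('a \<Rightarrow> 'a) \<Rightarrow> 'a \<Rightarrow> bool" where
  "recurrent T f y = (y \<in> omega_limit T f y)"

definition orbit :: "('a \<Rightarrow> 'a) \<Rightarrow> 'a \<Rightarrow> 'a set" where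
  "orbit f x = {(f ^^ n) x | n. True}"

end

theory Submission
  imports Defs
begin

(* Take one agent whose relation is an infinite successor chain and read the truth values of
   atom 0 along the chain as the binary digits of a number, least significant first.  A
   three-action Boolean action model whose postconditions toggle the atom implements binary
   increment, so the n-th iterate of the induced map, started at the chain on which atom 0 is
   everywhere false, is the chain encoding n.  Distinct numbers are separated by the formulas
   Box^k p, so the orbit is not periodic.  A formula of modal depth d only sees the digits
   below d + 1, hence every formula true at the encoding of 0 is eventually true at the
   encodings of 2^(j+1): in the Stone topology the starting point is recurrent. *)

lemma sat_Imp [simp]: "sat M s (Imp a b) = (sat M s a \<longrightarrow> sat M s b)"
  by (simp add: Imp_def)

lemma wf_fm_Imp [simp]: "wf_fm Phi I (Imp a b) = (wf_fm Phi I a \<and> wf_fm Phi I b)"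
  by (simp add: Imp_def)

lemma psat_Top [simp]: "psat x Top"
  by (simp add: psat_def)

lemma psat_Neg [simp]: "psat x (Neg a) \<longleftrightarrow> \<not> psat x a"
  by (simp add: psat_def)

lemma pv_sat: "pv (sat M s) a = sat M s a"
  by (induction a) auto

lemma sat_subst_fm:
  assumes "\<forall>i. R M i \<subseteq> W M \<times> W M" "t \<in> W M"
  shows "sat M t (subst_fm g a) = sat (M\<lparr>V := \<lambda>p. {u \<in> W M. sat M u (g p)}\<rparr>) t a"
  using assms(2)
proof (induction a arbitrary: t)
  case (Box i a)
  then show ?case using assms(1) by auto
qed auto

lemma wf_fm_subst_fm:
  "wf_fm Phi I a \<Longrightarrow> \<forall>p\<in>Phi. wf_fm Phi I (g p) \<Longrightarrow> wf_fm Phi I (subst_fm g a)"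
  by (induction a) auto

lemma wf_pmodel_successor:
  "wf_pmodel (M, s) \<Longrightarrow> (s, t) \<in> R M i \<Longrightarrow> wf_pmodel (M, t)"
  unfolding wf_pmodel_def Let_def by auto

definition valid_fms :: "nat set \<Rightarrow> nat set \<Rightarrow> fm set" where
  "valid_fms Phi I = {a. wf_fm Phi I a \<and> (\<forall>x. wf_pmodel x \<longrightarrow> psat x a)}"

lemma tautology_in_valid_fms:
  assumes "wf_fm Phi I a" "tautology a"
  shows "a \<in> valid_fms Phi I"
proof -
  have "sat M s a" for M s
    using assms(2) pv_sat[of M s a] unfolding tautology_def by blast
  then show ?thesis
    using assms(1) by (simp add: valid_fms_def psat_def)
qed

lemma Box_in_valid_fms:
  assumes "i \<in> I" "a \<in> valid_fms Phi I"
  shows "Box i a \<in> valid_fms Phi I"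
proof -
  have "sat M t a" if "wf_pmodel (M, s)" "(s, t) \<in> R M i" for M s t
    using assms(2) wf_pmodel_successor[OF that] by (auto simp: valid_fms_def psat_def)
  then show ?thesis
    using assms by (auto simp: valid_fms_def psat_def)
qed

lemma subst_fm_in_valid_fms:
  assumes "a \<in> valid_fms Phi I" "\<forall>p\<in>Phi. wf_fm Phi I (g p)"
  shows "subst_fm g a \<in> valid_fms Phi I"
proof -
  have "sat M s (subst_fm g a)" if wf: "wf_pmodel (M, s)" for M s
  proof -
    let ?M' = "M\<lparr>V := \<lambda>p. {u \<in> W M. sat M u (g p)}\<rparr>"
    have "wf_pmodel (?M', s)"
      using wf unfolding wf_pmodel_def Let_def by auto
    then have "sat ?M' s a"
      using assms(1) by (auto simp: valid_fms_def psat_def)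
    then show ?thesis
      using wf sat_subst_fm[of M s g a] unfolding wf_pmodel_def Let_def by auto
  qed
  then show ?thesis
    using assms wf_fm_subst_fm by (auto simp: valid_fms_def psat_def)
qed

lemma normal_logic_valid_fms: "normal_logic Phi I (valid_fms Phi I)"
  unfolding normal_logic_def
  using tautology_in_valid_fms Box_in_valid_fms subst_fm_in_valid_fms
  by (auto simp: valid_fms_def psat_def)

lemma modal_space_of_valid_fms:
  "\<forall>x\<in>X. wf_pmodel x \<Longrightarrow> modal_space_of Phi I (valid_fms Phi I) X"
  unfolding modal_space_of_def valid_fms_def by blast

lemma wf_pmodel_prod_update:
  assumes "wf_pmodel x" "Des S \<subseteq> Acts S" "\<exists>!\<sigma>. \<sigma> \<in> Des S \<and> psat x (pre S \<sigma>)"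
  shows "wf_pmodel (prod_update x S)"
proof -
  let ?\<sigma> = "THE \<sigma>. \<sigma> \<in> Des S \<and> psat x (pre S \<sigma>)"
  have "?\<sigma> \<in> Des S \<and> psat x (pre S ?\<sigma>)"
    using assms(3) by (rule theI')
  then show ?thesis
    using assms(1,2)
    unfolding prod_update_def prod_model_def wf_pmodel_def Let_def psat_def by auto
qed

lemma cls_eq_singleton:
  assumes "x \<in> X" "\<And>y. y \<in> X \<Longrightarrow> \<forall>a. wf_fm Phi I a \<longrightarrow> psat y a = psat x a \<Longrightarrow> y = x"
  shows "cls Phi I X x = {x}"
  using assms unfolding cls_def by auto

lemma clean_map_cls_singleton:
  "cls Phi I X x = {x} \<Longrightarrow> clean_map Phi I X S (cls Phi I X x) = cls Phi I X (prod_update x S)"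
  by (simp add: clean_map_def)

lemma not_periodic_orbit_if_inj:
  assumes "inj (\<lambda>n. (f ^^ n) x)"
  shows "\<not> periodic_orbit f x"
proof
  assume "periodic_orbit f x"
  then obtain n k where "k > 0" "(f ^^ (n + k)) x = (f ^^ n) x"
    unfolding periodic_orbit_def by blast
  with injD[OF assms] show False by fastforce
qed

lemma limitin_topology_generated_by:
  assumes "l \<in> \<Union>B" "\<And>b. b \<in> B \<Longrightarrow> l \<in> b \<Longrightarrow> eventually (\<lambda>x. f x \<in> b) F"
  shows "limitin (topology_generated_by B) f l F"
  unfolding limitin_def openin_topology_generated_by_iff
proof (intro conjI allI impI)
  show "l \<in> topspace (topology_generated_by B)"
    using assms(1) by simp
  fix U assume "generate_topology_on B U \<and> l \<in> U"
  then have "generate_topology_on B U" "l \<in> U" by auto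
  then show "eventually (\<lambda>x. f x \<in> U) F"
  proof (induction rule: generate_topology_on.induct)
    case (Int a b)
    then show ?case by (auto intro: eventually_conj)
  next
    case (UN K)
    then obtain k where "k \<in> K" "l \<in> k" by auto
    with UN.IH have "eventually (\<lambda>x. f x \<in> k) F" by blast
    then show ?case by (rule eventually_mono) (use \<open>k \<in> K\<close> in blast)
  next
    case (Basis s)
    then show ?case using assms(2) by auto
  qed auto
qed

lemma limitin_stone_top:
  assumes "x \<in> X" "\<And>j. y j \<in> X"
    and "\<And>a. wf_fm Phi I a \<Longrightarrow> psat x a \<Longrightarrow> eventually (\<lambda>j. psat (y j) a) F"
  shows "limitin (stone_top Phi I X) (\<lambda>j. cls Phi I X (y j)) (cls Phi I X x) F"
  unfolding stone_top_def
proof (rule limitin_topology_generated_by[where f = "\<lambda>j. cls Phi I X (y j)"])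
  let ?B = "{{cls Phi I X z | z. z \<in> X \<and> psat z a} | a. wf_fm Phi I a}"
  have "{cls Phi I X z | z. z \<in> X \<and> psat z Top} \<in> ?B"
    by (rule CollectI, rule exI[of _ Top]) simp
  moreover have "cls Phi I X x \<in> {cls Phi I X z | z. z \<in> X \<and> psat z Top}"
    using assms(1) by (intro CollectI exI[of _ x]) simp
  ultimately show "cls Phi I X x \<in> \<Union> ?B"
    by (rule UnionI)
  fix b assume "b \<in> ?B" and x_b: "cls Phi I X x \<in> b"
  then obtain a where a: "wf_fm Phi I a" "b = {cls Phi I X z | z. z \<in> X \<and> psat z a}"
    by auto
  with x_b obtain z where z: "z \<in> X" "psat z a" "cls Phi I X x = cls Phi I X z"
    by auto
  have "z \<in> cls Phi I X x"
    using z by (simp add: cls_def)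
  then have "psat x a"
    using a(1) z(2) by (simp add: cls_def)
  then have "eventually (\<lambda>j. psat (y j) a) F"
    by (rule assms(3)[OF a(1)])
  then show "eventually (\<lambda>j. cls Phi I X (y j) \<in> b) F"
    by (rule eventually_mono) (use a(2) assms(2) in blast)
qed

definition point_model :: "nat set \<Rightarrow> pmodel" where
  "point_model Q = (\<lparr>W = {Base 0}, R = (\<lambda>i. {}), V = (\<lambda>q. if q \<in> Q then {Base 0} else {})\<rparr>, Base 0)"

lemma wf_point_model: "wf_pmodel (point_model Q)"
  by (simp add: point_model_def wf_pmodel_def)

lemma psat_point_model_Atom [simp]: "psat (point_model Q) (Atom p) \<longleftrightarrow> p \<in> Q"
  by (simp add: point_model_def psat_def)

lemma not_entails_at_point_model:
  "psat (point_model Q) a \<Longrightarrow> \<not> psat (point_model Q) b \<Longrightarrow> \<not> entails a b"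
  unfolding entails_def using wf_point_model by blast

lemma entails_Atom_Atom_iff [simp]: "entails (Atom q) (Atom p) \<longleftrightarrow> p = q"
proof
  show "entails (Atom q) (Atom p) \<Longrightarrow> p = q"
    using not_entails_at_point_model[of "{q}" "Atom q" "Atom p"] by auto
qed (simp add: entails_def)

lemma entails_Neg_Atom_Neg_Atom_iff [simp]: "entails (Neg (Atom q)) (Neg (Atom p)) \<longleftrightarrow> p = q"
proof
  show "entails (Neg (Atom q)) (Neg (Atom p)) \<Longrightarrow> p = q"
    using not_entails_at_point_model[of "{p}" "Neg (Atom q)" "Neg (Atom p)"] by auto
qed (simp add: entails_def)

lemma not_entails_Neg_Atom_Atom [simp]: "\<not> entails (Neg (Atom q)) (Atom p)"
  by (rule not_entails_at_point_model[of "{}"]) simp_all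

lemma not_entails_Atom_Neg_Atom [simp]: "\<not> entails (Atom q) (Neg (Atom p))"
  by (rule not_entails_at_point_model[of "{p, q}"]) simp_all

lemma not_entails_Top_Atom [simp]: "\<not> entails Top (Atom p)"
  by (rule not_entails_at_point_model[of "{}"]) simp_all

lemma not_entails_Top_Neg_Atom [simp]: "\<not> entails Top (Neg (Atom p))"
  by (rule not_entails_at_point_model[of "{p}"]) simp_all

fun chain_sat :: "(nat \<Rightarrow> bool) \<Rightarrow> nat \<Rightarrow> fm \<Rightarrow> bool" where
  "chain_sat \<beta> k Top = True"
| "chain_sat \<beta> k (Atom p) = (p = 0 \<and> \<beta> k)"
| "chain_sat \<beta> k (Neg a) = (\<not> chain_sat \<beta> k a)"
| "chain_sat \<beta> k (Conj a b) = (chain_sat \<beta> k a \<and> chain_sat \<beta> k b)"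
| "chain_sat \<beta> k (Box i a) = chain_sat \<beta> (Suc k) a"

definition chain_enum :: "pmodel \<Rightarrow> (nat \<Rightarrow> bool) \<Rightarrow> (nat \<Rightarrow> state) \<Rightarrow> bool" where
  "chain_enum x \<beta> e \<longleftrightarrow> e 0 = snd x \<and> (\<forall>k. e k \<in> W (fst x)) \<and>
     (\<forall>i k t. (e k, t) \<in> R (fst x) i \<longleftrightarrow> t = e (Suc k)) \<and>
     (\<forall>p k. e k \<in> V (fst x) p \<longleftrightarrow> p = 0 \<and> \<beta> k)"

lemma sat_chain_enum:
  assumes "chain_enum x \<beta> e"
  shows "sat (fst x) (e k) a = chain_sat \<beta> k a"
  using assms unfolding chain_enum_def
  by (induction a arbitrary: k) auto

lemma psat_chain_enum: "chain_enum x \<beta> e \<Longrightarrow> psat x a = chain_sat \<beta> 0 a"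
  using sat_chain_enum[of x \<beta> e 0 a] by (simp add: chain_enum_def psat_def)

fun modal_depth :: "fm \<Rightarrow> nat" where
  "modal_depth Top = 0"
| "modal_depth (Atom p) = 0"
| "modal_depth (Neg a) = modal_depth a"
| "modal_depth (Conj a b) = max (modal_depth a) (modal_depth b)"
| "modal_depth (Box i a) = Suc (modal_depth a)"

lemma chain_sat_cong:
  "\<forall>j \<le> modal_depth a. \<beta> (k + j) = \<beta>' (k + j) \<Longrightarrow> chain_sat \<beta> k a = chain_sat \<beta>' k a"
proof (induction a arbitrary: k)
  case (Atom p)
  then show ?case by (metis add_0_right chain_sat.simps(2) le0)
next
  case (Box i a)
  then have "\<forall>j \<le> modal_depth a. \<beta> (Suc k + j) = \<beta>' (Suc k + j)" by fastforce
  then show ?case using Box.IH by simp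
qed auto

fun box_iter :: "nat \<Rightarrow> fm \<Rightarrow> fm" where
  "box_iter 0 a = a"
| "box_iter (Suc m) a = Box 0 (box_iter m a)"

lemma wf_fm_box_iter: "0 \<in> I \<Longrightarrow> wf_fm Phi I a \<Longrightarrow> wf_fm Phi I (box_iter m a)"
  by (induction m) auto

lemma chain_sat_box_iter: "chain_sat \<beta> k (box_iter m a) = chain_sat \<beta> (k + m) a"
  by (induction m arbitrary: k) auto

(* Action 1 turns a 1 into a 0 and passes the
   carry on, action 0 turns a 0 into a 1 and absorbs the carry, action 2 copies a digit once the
   carry has been absorbed; the designated actions are those receiving the initial carry. *)
definition counter_am :: amodel where
  "counter_am = \<lparr>Acts = {0, 1, 2}, ARel = (\<lambda>i. {(1, 0), (1, 1), (0, 2), (2, 2)}),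
     pre = (\<lambda>\<sigma>. if \<sigma> = 0 then Neg (Atom 0) else if \<sigma> = 1 then Atom 0 else Top),
     post = (\<lambda>\<sigma>. if \<sigma> = 0 then Atom 0 else if \<sigma> = 1 then Neg (Atom 0) else Top),
     Des = {0, 1}\<rparr>"

definition counter_act :: "(nat \<Rightarrow> bool) \<Rightarrow> nat \<Rightarrow> nat" where
  "counter_act \<beta> k = (if \<forall>j<k. \<beta> j then if \<beta> k then 1 else 0 else 2)"

definition bits_succ :: "(nat \<Rightarrow> bool) \<Rightarrow> nat \<Rightarrow> bool" where
  "bits_succ \<beta> k \<longleftrightarrow> \<beta> k \<noteq> (\<forall>j<k. \<beta> j)"

lemma bit_Suc_carry: "bit (Suc n) k \<longleftrightarrow> bit n k \<noteq> (\<forall>j<k. bit n j)"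
proof (induction k arbitrary: n)
  case 0
  then show ?case by (simp add: bit_0)
next
  case (Suc k)
  have carry: "(\<forall>j<Suc k. bit n j) \<longleftrightarrow> odd n \<and> (\<forall>j<k. bit (n div 2) j)"
    by (auto simp: bit_0 bit_Suc less_Suc_eq_0_disj)
  show ?case
  proof (cases "even n")
    case True
    then have "Suc n div 2 = n div 2" by presburger
    then show ?thesis using True carry by (simp add: bit_Suc)
  next
    case False
    then have "Suc n div 2 = Suc (n div 2)" by presburger
    then show ?thesis using False carry Suc.IH[of "n div 2"] by (simp add: bit_Suc)
  qed
qed

lemma bits_succ_bit: "bits_succ (bit n) = bit (Suc n)"
  by (rule ext) (simp add: bits_succ_def bit_Suc_carry)

lemma counter_exhaustive_deterministic: "\<exists>!\<sigma>. \<sigma> \<in> Des counter_am \<and> psat x (pre counter_am \<sigma>)"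
  by (cases "psat x (Atom 0)")
    (auto simp: counter_am_def psat_def intro: ex1I[of _ 1] ex1I[of _ 0])

lemma counter_designated_act:
  assumes "chain_enum x \<beta> e"
  shows "(THE \<sigma>. \<sigma> \<in> Des counter_am \<and> psat x (pre counter_am \<sigma>)) = counter_act \<beta> 0"
proof -
  have "psat x (Atom 0) \<longleftrightarrow> \<beta> 0"
    using psat_chain_enum[OF assms] by simp
  then show ?thesis
    by (intro the_equality) (auto simp: counter_am_def counter_act_def)
qed

lemma counter_act_pre:
  assumes "chain_enum x \<beta> e"
  shows "counter_act \<beta> k \<in> Acts counter_am \<and> sat (fst x) (e k) (pre counter_am (counter_act \<beta> k))"
  using assms by (auto simp: counter_am_def counter_act_def chain_enum_def)

lemma counter_next_act_iff:
  assumes "chain_enum x \<beta> e"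
  shows "\<tau> \<in> Acts counter_am \<and> sat (fst x) (e (Suc k)) (pre counter_am \<tau>)
           \<and> (counter_act \<beta> k, \<tau>) \<in> ARel counter_am i
         \<longleftrightarrow> \<tau> = counter_act \<beta> (Suc k)"
  using assms by (auto simp: counter_am_def counter_act_def chain_enum_def less_Suc_eq)

lemma chain_enum_counter_update:
  assumes chain: "chain_enum x \<beta> e"
  shows "chain_enum (prod_update x counter_am) (bits_succ \<beta>) (\<lambda>k. Upd (e k) (counter_act \<beta> k))"
proof -
  let ?M = "prod_model (fst x) counter_am"
  have e: "e 0 = snd x" "e k \<in> W (fst x)" "(e k, t) \<in> R (fst x) i \<longleftrightarrow> t = e (Suc k)"
    "e k \<in> V (fst x) p \<longleftrightarrow> p = 0 \<and> \<beta> k" for k t i p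
    using chain by (auto simp: chain_enum_def)
  have model: "fst (prod_update x counter_am) = ?M"
    by (simp add: prod_update_def)
  have point: "snd (prod_update x counter_am) = Upd (e 0) (counter_act \<beta> 0)"
    by (simp add: prod_update_def counter_designated_act[OF chain] e(1))
  have states: "Upd s \<sigma> \<in> W ?M \<longleftrightarrow>
      s \<in> W (fst x) \<and> \<sigma> \<in> Acts counter_am \<and> sat (fst x) s (pre counter_am \<sigma>)" for s \<sigma>
    by (auto simp: prod_model_def Let_def)
  have in_W: "Upd (e k) (counter_act \<beta> k) \<in> W ?M" for k
    using counter_act_pre[OF chain] e(2) states by blast
  have rel: "(Upd (e k) (counter_act \<beta> k), t) \<in> R ?M i \<longleftrightarrow>
      t = Upd (e (Suc k)) (counter_act \<beta> (Suc k))" for k i t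
  proof
    assume "(Upd (e k) (counter_act \<beta> k), t) \<in> R ?M i"
    then obtain u \<tau> where t: "t = Upd u \<tau>" "Upd u \<tau> \<in> W ?M" "(e k, u) \<in> R (fst x) i"
        "(counter_act \<beta> k, \<tau>) \<in> ARel counter_am i"
      by (auto simp: prod_model_def Let_def)
    then have "u = e (Suc k)"
      using e(3) by blast
    with t have "\<tau> = counter_act \<beta> (Suc k)"
      using states counter_next_act_iff[OF chain] by blast
    with t \<open>u = e (Suc k)\<close> show "t = Upd (e (Suc k)) (counter_act \<beta> (Suc k))"
      by simp
  next
    assume "t = Upd (e (Suc k)) (counter_act \<beta> (Suc k))"
    moreover have "(counter_act \<beta> k, counter_act \<beta> (Suc k)) \<in> ARel counter_am i"
      using counter_next_act_iff[OF chain] by blast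
    ultimately show "(Upd (e k) (counter_act \<beta> k), t) \<in> R ?M i"
      using in_W e(3) by (auto simp: prod_model_def Let_def)
  qed
  have val: "Upd (e k) (counter_act \<beta> k) \<in> V ?M p \<longleftrightarrow> p = 0 \<and> bits_succ \<beta> k" for k p
    using in_W[of k] e(4)[of k]
    by (auto simp: prod_model_def Let_def counter_am_def counter_act_def bits_succ_def split: if_splits)
  show ?thesis
    unfolding chain_enum_def model point using in_W rel val by simp
qed

definition zero_chain :: pmodel where
  "zero_chain = (\<lparr>W = range Base, R = (\<lambda>i. {(Base k, Base (Suc k)) | k. True}), V = (\<lambda>p. {})\<rparr>, Base 0)"

definition counter_state :: "nat \<Rightarrow> pmodel" where
  "counter_state n = ((\<lambda>x. prod_update x counter_am) ^^ n) zero_chain"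

lemma counter_state_Suc: "counter_state (Suc n) = prod_update (counter_state n) counter_am"
  by (simp add: counter_state_def)

lemma chain_enum_counter_state: "\<exists>e. chain_enum (counter_state n) (bit n) e"
proof (induction n)
  case 0
  have "chain_enum zero_chain (\<lambda>k. False) Base"
    by (auto simp: chain_enum_def zero_chain_def)
  then show ?case
    by (auto simp: counter_state_def)
next
  case (Suc n)
  then obtain e where "chain_enum (counter_state n) (bit n) e"
    by blast
  from chain_enum_counter_update[OF this] show ?case
    by (auto simp: counter_state_Suc bits_succ_bit)
qed

lemma psat_counter_state: "psat (counter_state n) a = chain_sat (bit n) 0 a"
  using chain_enum_counter_state psat_chain_enum by blast

lemma wf_pmodel_counter_state: "wf_pmodel (counter_state n)"
proof (induction n)
  case 0
  then show ?case
    by (auto simp: counter_state_def zero_chain_def wf_pmodel_def)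
next
  case (Suc n)
  have "Des counter_am \<subseteq> Acts counter_am"
    by (simp add: counter_am_def)
  with Suc show ?case
    by (simp add: counter_state_Suc wf_pmodel_prod_update counter_exhaustive_deterministic)
qed

lemma counter_state_eqI:
  assumes "\<forall>a. wf_fm {0} {0} a \<longrightarrow> psat (counter_state m) a = psat (counter_state n) a"
  shows "m = n"
proof -
  have "bit m k = bit n k" for k
    using assms[rule_format, OF wf_fm_box_iter[of "{0}" "{0}" "Atom 0" k]]
    by (simp add: psat_counter_state chain_sat_box_iter)
  then show ?thesis
    by (simp add: bit_eq_iff)
qed

lemma inj_counter_state: "inj counter_state"
  by (rule injI) (simp add: counter_state_eqI)

lemma eventually_psat_counter_state_pow2:
  assumes "psat (counter_state 0) a"
  shows "eventually (\<lambda>j. psat (counter_state (2 ^ Suc j)) a) sequentially"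
proof (rule eventually_sequentiallyI[of "modal_depth a"])
  fix j assume j: "modal_depth a \<le> j"
  have "\<not> bit ((2::nat) ^ Suc j) i" if "i \<le> modal_depth a" for i
  proof -
    from that j have "i \<noteq> Suc j" by simp
    then show ?thesis by (simp only: bit_exp_iff) simp
  qed
  then have "chain_sat (bit ((2::nat) ^ Suc j)) 0 a = chain_sat (bit (0::nat)) 0 a"
    by (intro chain_sat_cong) simp
  then show "psat (counter_state (2 ^ Suc j)) a"
    using assms by (simp add: psat_counter_state)
qed

abbreviation counter_space :: "pmodel set" where
  "counter_space \<equiv> range counter_state"

abbreviation counter_map :: "pmodel set \<Rightarrow> pmodel set" where
  "counter_map \<equiv> clean_map {0} {0} counter_space counter_am"

lemma cls_counter_state: "cls {0} {0} counter_space (counter_state n) = {counter_state n}"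
  by (rule cls_eq_singleton) (auto dest: counter_state_eqI)

lemma funpow_counter_map:
  "(counter_map ^^ n) (cls {0} {0} counter_space (counter_state 0))
     = cls {0} {0} counter_space (counter_state n)"
  by (induction n) (simp_all add: clean_map_cls_singleton[OF cls_counter_state] counter_state_Suc)

lemma clean_action_model_counter: "clean_action_model {0} {0} counter_space counter_am"
proof -
  have "lit_conj {0} (Atom 0)" "lit_conj {0} (Neg (Atom 0))"
    by (simp_all add: lit_conj.intros)
  then have "wf_amodel {0} {0} counter_am"
    by (auto simp: wf_amodel_def counter_am_def)
  moreover have "precondition_finite counter_am"
    by (simp add: precondition_finite_def counter_am_def)
  moreover have "closing counter_space counter_am"
    by (auto simp: closing_def counter_state_Suc[symmetric])
  ultimately show ?thesis
    by (simp add: clean_action_model_def exhaustive_deterministic_def counter_exhaustive_deterministic)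
qed

lemma counter_orbit_not_periodic:
  "\<not> periodic_orbit counter_map (cls {0} {0} counter_space (counter_state 0))"
proof (rule not_periodic_orbit_if_inj)
  show "inj (\<lambda>n. (counter_map ^^ n) (cls {0} {0} counter_space (counter_state 0)))"
    unfolding funpow_counter_map unfolding cls_counter_state
    using inj_counter_state by (simp add: inj_def)
qed

lemma recurrent_counter_zero:
  "recurrent (stone_top {0} {0} counter_space) counter_map (cls {0} {0} counter_space (counter_state 0))"
  unfolding recurrent_def omega_limit_def
proof (intro CollectI exI[of _ "\<lambda>j. 2 ^ Suc j"] conjI)
  show "strict_mono (\<lambda>j. (2::nat) ^ Suc j)"
    by (rule strict_monoI) simp
  show "limitin (stone_top {0} {0} counter_space)
      (\<lambda>j. (counter_map ^^ (2 ^ Suc j)) (cls {0} {0} counter_space (counter_state 0)))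
      (cls {0} {0} counter_space (counter_state 0)) sequentially"
    unfolding funpow_counter_map
  proof (rule limitin_stone_top)
    fix a assume "psat (counter_state 0) a"
    then show "eventually (\<lambda>j. psat (counter_state (2 ^ Suc j)) a) sequentially"
      by (rule eventually_psat_counter_state_pow2)
  qed simp_all
qed

lemma in_orbit_self: "x \<in> orbit f x"
  unfolding orbit_def by (auto intro: exI[of _ 0])

theorem proposition11:
  shows "\<exists>(Phi::nat set) (I::nat set) (Lam::fm set) (X::pmodel set) (S::amodel).
     finite Phi \<and> finite I \<and> normal_logic Phi I Lam \<and> modal_space_of Phi I Lam X \<and>
     clean_action_model Phi I X S \<and> finite_am S \<and> boolean_am S \<and> \<not> static_am S \<and>
     (\<exists>x\<in>X.
        \<not> periodic_orbit (clean_map Phi I X S) (cls Phi I X x) \<and>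
        (\<exists>y\<in>orbit (clean_map Phi I X S) (cls Phi I X x).
            recurrent (stone_top Phi I X) (clean_map Phi I X S) y))"
proof (intro exI[of _ "{0::nat}"] exI[of _ "valid_fms {0} {0}"] exI[of _ counter_space]
    exI[of _ counter_am] conjI bexI[of _ "counter_state 0"]
    bexI[of _ "cls {0} {0} counter_space (counter_state 0)"])
  show "normal_logic {0} {0} (valid_fms {0} {0})"
    by (rule normal_logic_valid_fms)
  show "modal_space_of {0} {0} (valid_fms {0} {0}) counter_space"
    using wf_pmodel_counter_state by (auto intro: modal_space_of_valid_fms)
  show "clean_action_model {0} {0} counter_space counter_am"
    by (rule clean_action_model_counter)
  show "finite_am counter_am" "boolean_am counter_am" "\<not> static_am counter_am"
    by (simp_all add: finite_am_def boolean_am_def static_am_def counter_am_def)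
  show "\<not> periodic_orbit counter_map (cls {0} {0} counter_space (counter_state 0))"
    by (rule counter_orbit_not_periodic)
  show "recurrent (stone_top {0} {0} counter_space) counter_map
      (cls {0} {0} counter_space (counter_state 0))"
    by (rule recurrent_counter_zero)
  show "cls {0} {0} counter_space (counter_state 0)
      \<in> orbit counter_map (cls {0} {0} counter_space (counter_state 0))"
    by (rule in_orbit_self)
qed simp_all

end
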